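(* Let $F:\mathbb{P}(n)\to\mathbb{P}(n)$, $F(\Sigma)=I*\Sigma$. Then the maximum and minimum eigenvalues of $F(\Sigma)$ are monotone in $\Sigma$: if $\Sigma_1,\Sigma_2\in\mathbb{P}(n)$ with $\Sigma_1\preceq\Sigma_2$, then $\lambda_{\max}(I*\Sigma_1)\le\lambda_{\max}(I*\Sigma_2)$ and $\lambda_{\min}(I*\Sigma_1)\le\lambda_{\min}(I*\Sigma_2)$.
   Context: $\mathbb{P}(n)$ denotes the cone of $n\times n$ positive definite Hermitian matrices and $\preceq$ is the Löwner order ($A\preceq B$ iff $B-A$ is positive semidefinite). For $A,B\in\mathbb{P}(n)$, with $\lambda_{\max},\lambda_{\min}$ the largest and smallest eigenvalues of $BA^{-1}$, define $A*B=\frac{1}{\sqrt{\lambda_{\min}}+\sqrt{\lambda_{\max}}}\left(B+\sqrt{\lambda_{\min}\lambda_{\max}}\,A\right)$. *)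

theory Defs
  imports "HOL-Analysis.Analysis"
begin

text \<open>Square complex matrices of a fixed (arbitrary, finite) dimension n = CARD('n).\<close>

definition adjoint_mat :: "complex^'n^'n \<Rightarrow> complex^'n^'n" where
  "adjoint_mat A = (\<chi> i j. cnj (A $ j $ i))"

definition hermitian_mat :: "complex^'n^'n \<Rightarrow> bool" where
  "hermitian_mat A \<longleftrightarrow> adjoint_mat A = A"

definition qform :: "complex^'n^'n \<Rightarrow> complex^'n \<Rightarrow> complex" where
  "qform A x = (\<Sum>i\<in>UNIV. cnj (x $ i) * (A *v x) $ i)"

definition pos_def_mat :: "complex^'n^'n \<Rightarrow> bool" where
  "pos_def_mat A \<longleftrightarrow> hermitian_mat A \<and> (\<forall>x. x \<noteq> 0 \<longrightarrow> Re (qform A x) > 0)"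

definition pos_semidef_mat :: "complex^'n^'n \<Rightarrow> bool" where
  "pos_semidef_mat A \<longleftrightarrow> hermitian_mat A \<and> (\<forall>x. Re (qform A x) \<ge> 0)"

definition loewner_le :: "complex^'n^'n \<Rightarrow> complex^'n^'n \<Rightarrow> bool" where
  "loewner_le A B \<longleftrightarrow> pos_semidef_mat (B - A)"

text \<open>Real eigenvalues of a complex matrix (all eigenvalues of the matrices
  considered here, Hermitian matrices and B A^{-1} with A, B positive definite, are real).\<close>
definition real_eigenvalues :: "complex^'n^'n \<Rightarrow> real set" where
  "real_eigenvalues M = {l. \<exists>v. v \<noteq> 0 \<and> M *v v = complex_of_real l *s v}"

definition lambda_max :: "complex^'n^'n \<Rightarrow> real" where
  "lambda_max M = Max (real_eigenvalues M)"

definition lambda_min :: "complex^'n^'n \<Rightarrow> real" where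
  "lambda_min M = Min (real_eigenvalues M)"

definition star_op :: "complex^'n^'n \<Rightarrow> complex^'n^'n \<Rightarrow> complex^'n^'n" where
  "star_op A B =
    (let M = B ** matrix_inv A; lmax = lambda_max M; lmin = lambda_min M
     in (1 / (sqrt lmin + sqrt lmax)) *\<^sub>R (B + sqrt (lmin * lmax) *\<^sub>R A))"

end

theory Submission
  imports Defs
begin

(*
  For A = I the matrix B A^-1 is just Sigma, so I * Sigma = c (Sigma + sqrt (lmin lmax) I) with
  c = 1 / (sqrt lmin + sqrt lmax) > 0. Its eigenvalues are the images of those of Sigma under
  the increasing affine map l |-> c (l + sqrt (lmin lmax)), which sends lmin to sqrt lmin and
  lmax to sqrt lmax. Hence the extreme eigenvalues of I * Sigma are the square roots of those
  of Sigma, and the claim reduces to the monotonicity of the extreme eigenvalues of Hermitian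
  matrices in the Loewner order. That follows from the Rayleigh characterisation
  lmax A = max {x^* A x | |x| = 1}, together with lmin A = - lmax (- A).
*)

definition cinner :: "complex^'n \<Rightarrow> complex^'n \<Rightarrow> complex" where
  "cinner x y = (\<Sum>i\<in>UNIV. cnj (x $ i) * y $ i)"

lemma qform_eq_cinner: "qform A x = cinner x (A *v x)"
  by (simp add: qform_def cinner_def)

lemma cinner_scale_left: "cinner (c *s x) y = cnj c * cinner x y"
  by (simp add: cinner_def sum_distrib_left mult.assoc)

lemma cinner_scale_right: "cinner x (c *s y) = c * cinner x y"
  by (simp add: cinner_def sum_distrib_left mult.left_commute)

lemma cinner_diff_left: "cinner (x - y) z = cinner x z - cinner y z"
  by (simp add: cinner_def sum_subtractf left_diff_distrib)

lemma cinner_diff_right: "cinner x (y - z) = cinner x y - cinner x z"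
  by (simp add: cinner_def sum_subtractf right_diff_distrib)

lemma Re_cinner: "Re (cinner x y) = inner x y"
  by (simp add: inner_vec_def cinner_def inner_complex_def Re_sum)

lemma cinner_self: "cinner x x = of_real ((norm x)\<^sup>2)"
proof -
  have "cinner x x = (\<Sum>i\<in>UNIV. (of_real (norm (x $ i)))\<^sup>2)"
    unfolding cinner_def by (rule sum.cong) (auto simp: complex_norm_square[symmetric] mult.commute)
  also have "\<dots> = of_real (\<Sum>i\<in>UNIV. (norm (x $ i))\<^sup>2)"
    by simp
  also have "\<dots> = of_real ((norm x)\<^sup>2)"
    by (simp add: power2_norm_eq_inner inner_vec_def)
  finally show ?thesis .
qed

lemma hermitian_mat_cinner:
  assumes "hermitian_mat A"
  shows "cinner (A *v x) y = cinner x (A *v y)"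
proof -
  have A: "cnj (A $ j $ i) = A $ i $ j" for i j
    using assms unfolding hermitian_mat_def adjoint_mat_def by (metis vec_lambda_beta)
  have "cinner (A *v x) y = (\<Sum>i\<in>UNIV. \<Sum>j\<in>UNIV. cnj (x $ j) * A $ j $ i * y $ i)"
    by (simp add: cinner_def matrix_vector_mult_def sum_distrib_left sum_distrib_right A mult_ac)
  also have "\<dots> = cinner x (A *v y)"
    by (subst sum.swap) (simp add: cinner_def matrix_vector_mult_def sum_distrib_left mult.assoc)
  finally show ?thesis .
qed

lemma scaleR_eq_smult_of_real: "r *\<^sub>R x = complex_of_real r *s x"
  by (simp add: vec_eq_iff) (simp add: scaleR_conv_of_real)

lemma qform_scaleR: "qform A (r *\<^sub>R x) = of_real (r\<^sup>2) * qform A x"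
  by (simp add: qform_eq_cinner scaleR_eq_smult_of_real vector_scalar_commute
      cinner_scale_left cinner_scale_right power2_eq_square)

lemma mat_mult_vector: "mat c *v x = c *s (x :: 'a::comm_ring_1^'n)"
  by (simp add: vec_eq_iff matrix_vector_mult_def mat_def if_distrib[of "\<lambda>a. a * _"] cong: if_cong)

lemma scaleR_matrix_vector: "(r *\<^sub>R A) *v x = r *\<^sub>R (A *v (x :: complex^'n))"
  by (simp add: vec_eq_iff matrix_vector_mult_def scaleR_sum_right)

lemma qform_sgn: "Re (qform A x) = (norm x)\<^sup>2 * Re (qform A (sgn x))"
proof (cases "x = 0")
  case True
  then show ?thesis by (simp add: qform_def)
next
  case False
  have "x = norm x *\<^sub>R sgn x" using False by (simp add: sgn_div_norm)
  then have "qform A x = of_real ((norm x)\<^sup>2) * qform A (sgn x)"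
    by (metis qform_scaleR)
  then show ?thesis by simp
qed

lemma qform_diff: "qform (A - B) x = qform A x - qform B x"
  by (simp add: qform_def matrix_vector_mult_diff_rdistrib sum_subtractf right_diff_distrib)

lemma qform_mat: "qform (mat c) x = c * of_real ((norm x)\<^sup>2)"
  by (simp add: qform_eq_cinner mat_mult_vector cinner_scale_right cinner_self)

lemma continuous_on_Re_qform: "continuous_on S (\<lambda>x. Re (qform A x))"
  unfolding qform_def matrix_vector_mult_def by (intro continuous_intros)

lemma hermitian_mat_diff: "hermitian_mat A \<Longrightarrow> hermitian_mat B \<Longrightarrow> hermitian_mat (A - B)"
  by (simp add: hermitian_mat_def adjoint_mat_def vec_eq_iff)

lemma hermitian_mat_uminus: "hermitian_mat A \<Longrightarrow> hermitian_mat (- A)"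
  by (simp add: hermitian_mat_def adjoint_mat_def vec_eq_iff)

lemma hermitian_mat_of_real: "hermitian_mat (mat (of_real r))"
  by (simp add: hermitian_mat_def adjoint_mat_def vec_eq_iff mat_def)

lemma loewner_le_uminus: "loewner_le (- B) (- A) \<longleftrightarrow> loewner_le A B"
  by (simp add: loewner_le_def)

lemma loewner_le_imp_qform_le: "loewner_le A B \<Longrightarrow> Re (qform A x) \<le> Re (qform B x)"
  by (simp add: loewner_le_def pos_semidef_mat_def qform_diff)

lemma pos_semidef_qform_eq_0_imp_mult_eq_0:
  assumes psd: "pos_semidef_mat B" and "Re (qform B x) = 0"
  shows "B *v x = 0"
proof -
  define y where "y = B *v x"
  define N where "N = (norm y)\<^sup>2"
  define Q where "Q = Re (qform B y)"
  have "Q \<ge> 0" using psd by (simp add: Q_def pos_semidef_mat_def)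
  have expand: "Re (qform B (x - s *\<^sub>R y)) = s\<^sup>2 * Q - 2 * s * N" for s
  proof -
    have "cinner y (B *v x) = of_real N" "cinner x (B *v y) = of_real N"
      using hermitian_mat_cinner[of B x y] psd
      by (simp_all add: y_def N_def cinner_self pos_semidef_mat_def)
    then show ?thesis
      using \<open>Re (qform B x) = 0\<close>
      by (simp add: qform_eq_cinner Q_def matrix_vector_mult_diff_distrib scaleR_eq_smult_of_real
          vector_scalar_commute cinner_diff_left cinner_diff_right cinner_scale_left cinner_scale_right
          power2_eq_square algebra_simps)
  qed
  txt \<open>The quadratic s \<mapsto> s^2 Q - 2 s N is nonnegative, which near s = 0 forces N = 0.\<close>
  have "N \<le> 0"
  proof (rule ccontr)
    assume "\<not> N \<le> 0"
    define s where "s = N / (Q + 1)"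
    have "s > 0" "s * Q < N"
      using \<open>\<not> N \<le> 0\<close> \<open>Q \<ge> 0\<close> by (simp_all add: s_def field_simps)
    then have "s * (s * Q - 2 * N) < 0"
      using \<open>\<not> N \<le> 0\<close> by (intro mult_pos_neg) auto
    moreover have "0 \<le> Re (qform B (x - s *\<^sub>R y))"
      using psd by (simp add: pos_semidef_mat_def)
    ultimately show False
      unfolding expand by (simp add: power2_eq_square algebra_simps)
  qed
  then show ?thesis by (simp add: N_def y_def)
qed

lemma real_eigenvalues_iff: "l \<in> real_eigenvalues M \<longleftrightarrow> (\<exists>v. v \<noteq> 0 \<and> M *v v = l *\<^sub>R v)"
  by (simp add: real_eigenvalues_def scaleR_eq_smult_of_real)

lemma hermitian_mat_max_eigenvector:
  assumes "hermitian_mat A"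
  obtains v where "norm v = 1" "Re (qform A v) \<in> real_eigenvalues A"
    "\<And>x. norm x = 1 \<Longrightarrow> Re (qform A x) \<le> Re (qform A v)"
proof -
  obtain v where v: "v \<in> sphere 0 1" and max: "\<And>x. x \<in> sphere 0 1 \<Longrightarrow> Re (qform A x) \<le> Re (qform A v)"
    using continuous_attains_sup[OF compact_sphere _ continuous_on_Re_qform, of 0 1 A] by auto
  define m where "m = Re (qform A v)"
  txt \<open>By maximality m I - A is positive semidefinite, and its form vanishes at v.\<close>
  define B where "B = mat (of_real m) - A"
  have Re_qform_B: "Re (qform B x) = (norm x)\<^sup>2 * (m - Re (qform A (sgn x)))" for x
    by (simp add: B_def qform_diff qform_mat qform_sgn[of A x] algebra_simps)
  have "pos_semidef_mat B"
    unfolding pos_semidef_mat_def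
  proof (intro conjI allI)
    show "hermitian_mat B"
      unfolding B_def by (intro hermitian_mat_diff hermitian_mat_of_real assms)
    show "0 \<le> Re (qform B x)" for x
      using max[of "sgn x"] by (cases "x = 0") (simp_all add: Re_qform_B m_def norm_sgn)
  qed
  moreover have "Re (qform B v) = 0"
    using v by (simp add: Re_qform_B m_def sgn_div_norm)
  ultimately have "B *v v = 0"
    by (rule pos_semidef_qform_eq_0_imp_mult_eq_0)
  then have "A *v v = m *\<^sub>R v"
    by (simp add: B_def matrix_vector_mult_diff_rdistrib mat_mult_vector scaleR_eq_smult_of_real)
  moreover have "v \<noteq> 0"
    using v by auto
  ultimately have "m \<in> real_eigenvalues A"
    by (auto simp: real_eigenvalues_iff)
  with v max that show ?thesis
    by (simp add: m_def)
qed

lemma real_eigenvalue_eq_qform_unit: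
  assumes "l \<in> real_eigenvalues A"
  obtains u where "norm u = 1" "Re (qform A u) = l"
proof -
  obtain v where "v \<noteq> 0" "A *v v = l *\<^sub>R v"
    using assms by (auto simp: real_eigenvalues_iff)
  then have "Re (qform A v) = (norm v)\<^sup>2 * l"
    by (simp add: qform_eq_cinner scaleR_eq_smult_of_real cinner_scale_right cinner_self)
  then have "(norm v)\<^sup>2 * Re (qform A (sgn v)) = (norm v)\<^sup>2 * l"
    by (simp add: qform_sgn[symmetric])
  with \<open>v \<noteq> 0\<close> that[of "sgn v"] show ?thesis
    by (simp add: norm_sgn)
qed

lemma finite_real_eigenvalues:
  assumes "hermitian_mat A"
  shows "finite (real_eigenvalues A)"
proof -
  define E where "E = real_eigenvalues A"
  define f where "f l = (SOME v. v \<noteq> 0 \<and> A *v v = l *\<^sub>R v)" for l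
  have f: "f l \<noteq> 0" "A *v f l = l *\<^sub>R f l" if "l \<in> E" for l
    using someI_ex[of "\<lambda>v. v \<noteq> 0 \<and> A *v v = l *\<^sub>R v"] that
    by (auto simp: E_def f_def real_eigenvalues_iff)
  have "inj_on f E"
  proof (rule inj_onI)
    fix l k assume "l \<in> E" "k \<in> E" "f l = f k"
    then have "l *\<^sub>R f l = k *\<^sub>R f l" "f l \<noteq> 0" using f by metis+
    then show "l = k" by simp
  qed
  moreover have "pairwise orthogonal (f ` E)"
  proof (clarsimp simp: pairwise_def)
    fix l k assume "l \<in> E" "k \<in> E" "f l \<noteq> f k"
    then have "l \<noteq> k" by auto
    have "of_real l * cinner (f l) (f k) = of_real k * cinner (f l) (f k)"
      using hermitian_mat_cinner[OF assms, of "f l" "f k"] f[OF \<open>l \<in> E\<close>] f[OF \<open>k \<in> E\<close>]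
      by (simp add: scaleR_eq_smult_of_real cinner_scale_left cinner_scale_right)
    with \<open>l \<noteq> k\<close> have "cinner (f l) (f k) = 0" by simp
    then show "orthogonal (f l) (f k)"
      by (simp add: orthogonal_def Re_cinner[symmetric])
  qed
  moreover have "0 \<notin> f ` E" using f by auto
  ultimately have "finite (f ` E)"
    using pairwise_orthogonal_independent independent_bound by blast
  with \<open>inj_on f E\<close> show ?thesis
    using E_def finite_imageD by blast
qed

lemma hermitian_lambda_max:
  assumes "hermitian_mat A"
  shows "lambda_max A \<in> real_eigenvalues A"
    and "norm x = 1 \<Longrightarrow> Re (qform A x) \<le> lambda_max A"
proof -
  obtain v where v: "Re (qform A v) \<in> real_eigenvalues A"
    and max: "\<And>x. norm x = 1 \<Longrightarrow> Re (qform A x) \<le> Re (qform A v)"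
    using hermitian_mat_max_eigenvector[OF assms] by blast
  have "lambda_max A = Re (qform A v)"
    unfolding lambda_max_def
  proof (rule Max_eqI[OF finite_real_eigenvalues[OF assms] _ v])
    show "l \<le> Re (qform A v)" if "l \<in> real_eigenvalues A" for l
      using that max by (metis real_eigenvalue_eq_qform_unit)
  qed
  with v max show "lambda_max A \<in> real_eigenvalues A" and "norm x = 1 \<Longrightarrow> Re (qform A x) \<le> lambda_max A"
    by simp_all
qed

lemma lambda_max_mono:
  assumes "hermitian_mat A" "hermitian_mat B" "loewner_le A B"
  shows "lambda_max A \<le> lambda_max B"
proof -
  obtain u where "norm u = 1" "Re (qform A u) = lambda_max A"
    using real_eigenvalue_eq_qform_unit hermitian_lambda_max(1)[OF assms(1)] by blast
  then show ?thesis
    using loewner_le_imp_qform_le[OF assms(3), of u] hermitian_lambda_max(2)[OF assms(2), of u] by simp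
qed

lemma real_eigenvalues_affine:
  assumes "c \<noteq> 0"
  shows "real_eigenvalues (c *\<^sub>R (A + d *\<^sub>R mat 1)) = (\<lambda>l. c * (l + d)) ` real_eigenvalues A"
proof -
  have eigen_iff: "(c *\<^sub>R (A + d *\<^sub>R mat 1)) *v v = k *\<^sub>R v \<longleftrightarrow> A *v v = (k / c - d) *\<^sub>R v" for k v
  proof -
    have "k *\<^sub>R v = c *\<^sub>R ((k / c) *\<^sub>R v)"
      using assms by simp
    then have "c *\<^sub>R (A *v v + d *\<^sub>R v) = k *\<^sub>R v \<longleftrightarrow> A *v v + d *\<^sub>R v = (k / c) *\<^sub>R v"
      by (simp only: scaleR_cancel_left) (simp add: assms)
    then show ?thesis
      by (simp add: scaleR_matrix_vector matrix_vector_mult_add_rdistrib scaleR_left_diff_distrib eq_diff_eq)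
  qed
  show ?thesis
  proof (rule set_eqI)
    fix k
    have "k \<in> real_eigenvalues (c *\<^sub>R (A + d *\<^sub>R mat 1)) \<longleftrightarrow> k / c - d \<in> real_eigenvalues A"
      by (simp add: real_eigenvalues_iff eigen_iff)
    also have "\<dots> \<longleftrightarrow> k \<in> (\<lambda>l. c * (l + d)) ` real_eigenvalues A"
    proof
      assume "k / c - d \<in> real_eigenvalues A"
      moreover have "k = c * ((k / c - d) + d)"
        using assms by simp
      ultimately show "k \<in> (\<lambda>l. c * (l + d)) ` real_eigenvalues A"
        by (rule rev_image_eqI)
    qed (use assms in auto)
    finally show "k \<in> real_eigenvalues (c *\<^sub>R (A + d *\<^sub>R mat 1)) \<longleftrightarrow> k \<in> (\<lambda>l. c * (l + d)) ` real_eigenvalues A" .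
  qed
qed

lemma real_eigenvalues_hermitian_nonempty: "hermitian_mat A \<Longrightarrow> real_eigenvalues A \<noteq> {}"
  using hermitian_lambda_max(1) by blast

lemma lambda_max_affine:
  assumes "hermitian_mat A" "c > 0"
  shows "lambda_max (c *\<^sub>R (A + d *\<^sub>R mat 1)) = c * (lambda_max A + d)"
  unfolding lambda_max_def real_eigenvalues_affine[OF less_imp_neq[OF assms(2), symmetric]]
  using assms finite_real_eigenvalues real_eigenvalues_hermitian_nonempty
  by (intro mono_Max_commute[symmetric] monoI) simp_all

lemma lambda_min_affine:
  assumes "hermitian_mat A" "c > 0"
  shows "lambda_min (c *\<^sub>R (A + d *\<^sub>R mat 1)) = c * (lambda_min A + d)"
  unfolding lambda_min_def real_eigenvalues_affine[OF less_imp_neq[OF assms(2), symmetric]]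
  using assms finite_real_eigenvalues real_eigenvalues_hermitian_nonempty
  by (intro mono_Min_commute[symmetric] monoI) simp_all

lemma lambda_min_eq_uminus_lambda_max:
  assumes "hermitian_mat A"
  shows "lambda_min A = - lambda_max (- A)"
proof -
  have "real_eigenvalues (- A) = real_eigenvalues ((- 1) *\<^sub>R (A + 0 *\<^sub>R mat 1))"
    by simp
  also have "\<dots> = uminus ` real_eigenvalues A"
    using real_eigenvalues_affine[of "- 1" A 0] by simp
  finally have "real_eigenvalues (- A) = uminus ` real_eigenvalues A" .
  then show ?thesis
    using finite_real_eigenvalues[OF assms] real_eigenvalues_hermitian_nonempty[OF assms]
    by (simp add: lambda_min_def lambda_max_def flip: minus_Min_eq_Max)
qed

lemma lambda_min_mono:
  assumes "hermitian_mat A" "hermitian_mat B" "loewner_le A B"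
  shows "lambda_min A \<le> lambda_min B"
  using lambda_max_mono[of "- B" "- A"] assms
  by (simp add: lambda_min_eq_uminus_lambda_max hermitian_mat_uminus loewner_le_uminus)

lemma pos_def_real_eigenvalue_pos:
  assumes "pos_def_mat A" "l \<in> real_eigenvalues A"
  shows "l > 0"
proof -
  obtain u where "norm u = 1" "Re (qform A u) = l"
    using real_eigenvalue_eq_qform_unit[OF assms(2)] by blast
  moreover from \<open>norm u = 1\<close> have "u \<noteq> 0"
    by auto
  ultimately show ?thesis
    using assms(1) by (auto simp: pos_def_mat_def)
qed

lemma pos_def_lambda_min_max_pos:
  assumes "pos_def_mat A"
  shows "lambda_min A > 0" and "lambda_max A > 0"
proof -
  have "hermitian_mat A"
    using assms by (simp add: pos_def_mat_def)
  then have "lambda_min A \<in> real_eigenvalues A" "lambda_max A \<in> real_eigenvalues A"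
    unfolding lambda_min_def
    by (simp_all add: finite_real_eigenvalues real_eigenvalues_hermitian_nonempty hermitian_lambda_max(1))
  with assms show "lambda_min A > 0" and "lambda_max A > 0"
    by (simp_all add: pos_def_real_eigenvalue_pos)
qed

lemma matrix_inv_mat_1: "matrix_inv (mat 1 :: 'a::semiring_1^'n^'n) = mat 1"
proof -
  have "mat 1 ** matrix_inv (mat 1 :: 'a^'n^'n) = mat 1"
    unfolding matrix_inv_def by (rule someI2[of _ "mat 1"]) simp_all
  then show ?thesis
    by simp
qed

lemma star_op_mat_1:
  "star_op (mat 1) S =
    (1 / (sqrt (lambda_min S) + sqrt (lambda_max S))) *\<^sub>R (S + sqrt (lambda_min S * lambda_max S) *\<^sub>R mat 1)"
  by (simp add: star_op_def Let_def matrix_inv_mat_1)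

lemma add_sqrt_mult_div_sqrt_add:
  fixes a b :: real
  assumes "0 \<le> a" "0 < b"
  shows "(b + sqrt (a * b)) / (sqrt a + sqrt b) = sqrt b"
proof -
  have "b + sqrt (a * b) = sqrt b * (sqrt a + sqrt b)"
    using assms by (simp add: real_sqrt_mult algebra_simps)
  moreover have "sqrt a + sqrt b > 0"
    using assms by (simp add: add_nonneg_pos)
  ultimately show ?thesis
    by simp
qed

lemma lambda_max_star_op_mat_1:
  assumes "pos_def_mat S"
  shows "lambda_max (star_op (mat 1) S) = sqrt (lambda_max S)"
  using assms pos_def_lambda_min_max_pos[OF assms]
  by (simp add: star_op_mat_1 lambda_max_affine pos_def_mat_def add_sqrt_mult_div_sqrt_add add_pos_pos)

lemma lambda_min_star_op_mat_1:
  assumes "pos_def_mat S"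
  shows "lambda_min (star_op (mat 1) S) = sqrt (lambda_min S)"
  using assms pos_def_lambda_min_max_pos[OF assms]
    add_sqrt_mult_div_sqrt_add[of "lambda_max S" "lambda_min S"]
  by (simp add: star_op_mat_1 lambda_min_affine pos_def_mat_def add_pos_pos mult.commute add.commute)

theorem proposition4:
  fixes S1 S2 :: "complex^'n^'n"
  assumes "pos_def_mat S1" and "pos_def_mat S2" and "loewner_le S1 S2"
  shows "lambda_max (star_op (mat 1) S1) \<le> lambda_max (star_op (mat 1) S2)
     \<and> lambda_min (star_op (mat 1) S1) \<le> lambda_min (star_op (mat 1) S2)"
proof -
  have "hermitian_mat S1" "hermitian_mat S2"
    using assms(1,2) by (simp_all add: pos_def_mat_def)
  with assms(3) have "lambda_max S1 \<le> lambda_max S2" "lambda_min S1 \<le> lambda_min S2"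
    by (simp_all add: lambda_max_mono lambda_min_mono)
  with assms(1,2) show ?thesis
    by (simp add: lambda_max_star_op_mat_1 lambda_min_star_op_mat_1)
qed

end
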